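(* Let $\alpha\ge0$, $\gamma'<0$, $\omega'>0$, and let $f:\mathbb{R}^2\to\mathbb{R}^2$ be the (transformed) Duffing van der Pol vector field $$f(x,y)=\big(\omega' y-\tfrac{\alpha}{3}x^3+\gamma' x,\;-\omega' x-y\big).$$ Let $N\ge3$ and consider the bidirectional ring network $\dot{z}_i=f(z_i)+A_{i+1,i}(z_{i+1}-z_i)+A_{i-1,i}(z_{i-1}-z_i)$, $i=1,\dots,N$ (indices modulo $N$), with balanced (interactional) couplings $A_{i,j}=A_{j,i}$ (real $2\times 2$ matrices). If $(A_{i,i+1})_s\succ0$ for all $i$, then for every initial condition $\|z_i(t)-z_j(t)\|\to0$ exponentially as $t\to\infty$ for all $i,j$.
   Context: This vector field arises from the Duffing van der Pol equation $\ddot{x}+(\alpha x^2-\gamma)\dot{x}+(\omega^2+\varepsilon x^2)x=0$ with $\varepsilon=\alpha/3$, $-(\omega^2+1)<\gamma<-1$, $\gamma'=\gamma+1$, $\omega'=\sqrt{\omega^2+\gamma'}$, and $y=\frac1{\omega'}(\dot x+\frac\alpha3x^3-\gamma' x)$. For a square matrix $M$, $M_s=\tfrac12(M+M^T)$; $\succ0$ means positive definite. *)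

theory Defs
  imports "HOL-Analysis.Analysis"
begin

definition dvdp_field :: "real \<Rightarrow> real \<Rightarrow> real \<Rightarrow> real^2 \<Rightarrow> real^2" where
  "dvdp_field \<alpha> \<gamma>' \<omega>' v =
     vector [\<omega>' * v$2 - \<alpha> / 3 * (v$1)^3 + \<gamma>' * v$1,
             - \<omega>' * v$1 - v$2]"

definition sym_part :: "real^'n^'n \<Rightarrow> real^'n^'n" where
  "sym_part M = (1/2) *\<^sub>R (M + transpose M)"

definition pos_def :: "real^'n^'n \<Rightarrow> bool" where
  "pos_def M \<longleftrightarrow> (\<forall>v. v \<noteq> 0 \<longrightarrow> v \<bullet> (M *v v) > 0)"

text \<open>Right-hand side of node i (0-based, indices mod N) of the bidirectional ring network.\<close>
definition ring_rhs ::
  "(real^2 \<Rightarrow> real^2) \<Rightarrow> nat \<Rightarrow> (nat \<Rightarrow> nat \<Rightarrow> real^2^2) \<Rightarrow> (nat \<Rightarrow> real^2) \<Rightarrow> nat \<Rightarrow> real^2" where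
  "ring_rhs f N A z i =
     f (z i) + A ((i + 1) mod N) i *v (z ((i + 1) mod N) - z i)
             + A ((i + N - 1) mod N) i *v (z ((i + N - 1) mod N) - z i)"

end

theory Submission
  imports Defs
begin

text \<open>
  Take as Lyapunov function the sum of all squared pairwise distances between the nodes.
  Along solutions its derivative splits into a vector-field part and a coupling part. The
  field is one-sided Lipschitz with constant \<open>-min (-\<gamma>') 1\<close>, since its \<open>\<omega>'\<close> terms are skew
  and \<open>x \<mapsto> x\<^sup>3\<close> is monotone; this bounds the first part by \<open>-2 min (-\<gamma>') 1\<close> times the
  Lyapunov function. By balancedness the coupling terms \<open>c\<^sub>i\<close> sum to zero over the ring, so the second part is a positive multiple of
  \<open>\<Sum>\<^sub>i z\<^sub>i \<bullet> c\<^sub>i\<close>; moving each predecessor term onto the edge it shares with its successor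
  turns this into minus the sum of the quadratic forms of \<open>A\<^sub>i\<^sub>,\<^sub>i\<^sub>+\<^sub>1\<close> on the edge differences,
  which is nonpositive. Gronwall's inequality then gives exponential decay.
\<close>

lemma cube_diff_monotone:
  fixes a b :: real
  shows "0 \<le> (a - b) * (a ^ 3 - b ^ 3)"
proof -
  have "(a - b) * (a ^ 3 - b ^ 3) = (a - b)\<^sup>2 * ((a + b / 2)\<^sup>2 + 3 / 4 * b\<^sup>2)"
    by (simp add: algebra_simps power2_eq_square power3_eq_cube)
  thus ?thesis by simp
qed

lemma dvdp_field_one_sided_lipschitz:
  assumes "\<alpha> \<ge> 0"
  shows "(u - v) \<bullet> (dvdp_field \<alpha> \<gamma>' \<omega>' u - dvdp_field \<alpha> \<gamma>' \<omega>' v)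
           \<le> - min (- \<gamma>') 1 * (norm (u - v))\<^sup>2"
proof -
  define a b p q where "a = u$1" and "b = v$1" and "p = u$2" and "q = v$2"
  have norm_eq: "(norm (u - v))\<^sup>2 = (a - b)\<^sup>2 + (p - q)\<^sup>2"
    unfolding power2_norm_eq_inner inner_vec_def sum_2 a_def b_def p_def q_def
    by (simp add: power2_eq_square)
  have inner_eq: "(u - v) \<bullet> (dvdp_field \<alpha> \<gamma>' \<omega>' u - dvdp_field \<alpha> \<gamma>' \<omega>' v)
      = - \<alpha> / 3 * ((a - b) * (a ^ 3 - b ^ 3)) + \<gamma>' * (a - b)\<^sup>2 - (p - q)\<^sup>2"
    unfolding inner_vec_def sum_2 a_def b_def p_def q_def dvdp_field_def
    by (simp add: field_simps power2_eq_square)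
  have "\<gamma>' * (a - b)\<^sup>2 \<le> - min (- \<gamma>') 1 * (a - b)\<^sup>2"
    by (intro mult_right_mono) auto
  moreover have "- (p - q)\<^sup>2 \<le> - min (- \<gamma>') 1 * (p - q)\<^sup>2"
    using mult_right_mono[of "min (- \<gamma>') 1" 1 "(p - q)\<^sup>2"] by simp
  moreover have "0 \<le> \<alpha> / 3 * ((a - b) * (a ^ 3 - b ^ 3))"
    using assms cube_diff_monotone by simp
  ultimately show ?thesis
    unfolding inner_eq norm_eq by (simp add: algebra_simps)
qed

lemma quadratic_form_sym_part: "v \<bullet> (sym_part M *v v) = v \<bullet> (M *v v)"
proof -
  have "v \<bullet> (transpose M *v v) = v \<bullet> (M *v v)"
    by (metis dot_lmul_matrix inner_commute vector_transpose_matrix)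
  moreover have "sym_part M *v v = (1 / 2) *\<^sub>R (M *v v + transpose M *v v)"
    by (simp add: sym_part_def matrix_vector_mult_def vec_eq_iff sum_distrib_left
        sum.distrib algebra_simps)
  ultimately show ?thesis
    by (simp add: inner_add_right)
qed

lemma pos_def_sym_part_imp_nonneg:
  assumes "pos_def (sym_part M)"
  shows "0 \<le> v \<bullet> (M *v v)"
  using assms quadratic_form_sym_part[of v M]
  by (cases "v = 0") (auto simp: pos_def_def less_imp_le)

lemma sum_ring_pred_reindex:
  fixes g :: "nat \<Rightarrow> nat \<Rightarrow> 'a::comm_monoid_add"
  assumes "N > 0"
  shows "(\<Sum>i<N. g ((i + N - 1) mod N) i) = (\<Sum>k<N. g k ((k + 1) mod N))"
proof -
  have succ_pred: "((i + N - 1) mod N + 1) mod N = i" if "i < N" for i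
    using that by (cases i) (auto simp: mod_Suc)
  have pred_succ: "((k + 1) mod N + N - 1) mod N = k" if "k < N" for k
    using that by (cases "k + 1 = N") auto
  show ?thesis
    by (rule sum.reindex_bij_witness[where i = "\<lambda>k. (k + 1) mod N" and j = "\<lambda>i. (i + N - 1) mod N"])
       (use assms succ_pred pred_succ in auto)
qed

definition ring_coupling ::
  "nat \<Rightarrow> (nat \<Rightarrow> nat \<Rightarrow> real^'n^'n) \<Rightarrow> (nat \<Rightarrow> real^'n) \<Rightarrow> nat \<Rightarrow> real^'n" where
  "ring_coupling N A x i =
     A ((i + 1) mod N) i *v (x ((i + 1) mod N) - x i)
       + A ((i + N - 1) mod N) i *v (x ((i + N - 1) mod N) - x i)"

lemma ring_rhs_eq: "ring_rhs f N A x i = f (x i) + ring_coupling N A x i"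
  unfolding ring_rhs_def ring_coupling_def by (simp add: add.assoc)

lemma sum_ring_coupling_eq_0:
  assumes "N > 0" and balanced: "\<And>i j. i < N \<Longrightarrow> j < N \<Longrightarrow> A i j = A j i"
  shows "(\<Sum>i<N. ring_coupling N A x i) = 0"
proof -
  have "(\<Sum>i<N. A ((i + N - 1) mod N) i *v (x ((i + N - 1) mod N) - x i))
      = (\<Sum>k<N. A k ((k + 1) mod N) *v (x k - x ((k + 1) mod N)))"
    using sum_ring_pred_reindex[OF \<open>N > 0\<close>, of "\<lambda>k i. A k i *v (x k - x i)"] by simp
  also have "\<dots> = (\<Sum>k<N. - (A ((k + 1) mod N) k *v (x ((k + 1) mod N) - x k)))"
    using assms by (intro sum.cong) (simp_all add: matrix_vector_mult_diff_distrib)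
  finally show ?thesis
    unfolding ring_coupling_def sum.distrib by (simp add: sum_negf)
qed

lemma sum_inner_ring_coupling_nonpos:
  assumes "N > 0" and balanced: "\<And>i j. i < N \<Longrightarrow> j < N \<Longrightarrow> A i j = A j i"
    and posdef: "\<And>i. i < N \<Longrightarrow> pos_def (sym_part (A i ((i + 1) mod N)))"
  shows "(\<Sum>i<N. x i \<bullet> ring_coupling N A x i) \<le> 0"
proof -
  let ?s = "\<lambda>k. (k + 1) mod N"
  have "(\<Sum>i<N. x i \<bullet> (A ((i + N - 1) mod N) i *v (x ((i + N - 1) mod N) - x i)))
      = (\<Sum>k<N. x (?s k) \<bullet> (A k (?s k) *v (x k - x (?s k))))"
    using sum_ring_pred_reindex[OF \<open>N > 0\<close>, of "\<lambda>k i. x i \<bullet> (A k i *v (x k - x i))"] by simp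
  then have "(\<Sum>i<N. x i \<bullet> ring_coupling N A x i)
      = (\<Sum>k<N. x k \<bullet> (A (?s k) k *v (x (?s k) - x k)) + x (?s k) \<bullet> (A k (?s k) *v (x k - x (?s k))))"
    unfolding ring_coupling_def inner_add_right sum.distrib by simp
  also have "\<dots> = (\<Sum>k<N. - ((x (?s k) - x k) \<bullet> (A k (?s k) *v (x (?s k) - x k))))"
    using assms by (intro sum.cong)
      (simp_all add: matrix_vector_mult_diff_distrib inner_diff_left inner_diff_right)
  also have "\<dots> \<le> 0"
    using posdef pos_def_sym_part_imp_nonneg by (intro sum_nonpos) auto
  finally show ?thesis .
qed

lemma sum_pairwise_inner_diff:
  fixes x c :: "'i \<Rightarrow> 'a::real_inner"
  assumes "sum c I = 0"
  shows "(\<Sum>i\<in>I. \<Sum>j\<in>I. (x i - x j) \<bullet> (c i - c j)) = 2 * real (card I) * (\<Sum>i\<in>I. x i \<bullet> c i)"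
proof -
  have cross: "(\<Sum>i\<in>I. \<Sum>j\<in>I. x i \<bullet> c j) = 0" "(\<Sum>i\<in>I. \<Sum>j\<in>I. x j \<bullet> c i) = 0"
    using assms by (simp_all add: inner_sum_left[symmetric] inner_sum_right[symmetric])
  have "(\<Sum>i\<in>I. \<Sum>j\<in>I. (x i - x j) \<bullet> (c i - c j)) =
     (\<Sum>i\<in>I. \<Sum>j\<in>I. x i \<bullet> c i) - (\<Sum>i\<in>I. \<Sum>j\<in>I. x i \<bullet> c j)
     - (\<Sum>i\<in>I. \<Sum>j\<in>I. x j \<bullet> c i) + (\<Sum>i\<in>I. \<Sum>j\<in>I. x j \<bullet> c j)"
    by (simp add: inner_diff_left inner_diff_right sum_subtractf sum.distrib)
  also have "\<dots> = 2 * real (card I) * (\<Sum>i\<in>I. x i \<bullet> c i)"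
    unfolding cross by (simp add: sum.swap[of _ I I] sum_distrib_left[symmetric])
  finally show ?thesis .
qed

lemma ring_pairwise_dissipation:
  assumes one_sided: "\<And>u v. (u - v) \<bullet> (f u - f v) \<le> - \<mu> * (norm (u - v))\<^sup>2"
    and "N > 0" and balanced: "\<And>i j. i < N \<Longrightarrow> j < N \<Longrightarrow> A i j = A j i"
    and posdef: "\<And>i. i < N \<Longrightarrow> pos_def (sym_part (A i ((i + 1) mod N)))"
  shows "(\<Sum>i<N. \<Sum>j<N. (x i - x j) \<bullet> (ring_rhs f N A x i - ring_rhs f N A x j))
           \<le> - \<mu> * (\<Sum>i<N. \<Sum>j<N. (norm (x i - x j))\<^sup>2)"
proof -
  let ?c = "ring_coupling N A x"
  have "(\<Sum>i<N. \<Sum>j<N. (x i - x j) \<bullet> (ring_rhs f N A x i - ring_rhs f N A x j))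
     = (\<Sum>i<N. \<Sum>j<N. (x i - x j) \<bullet> (f (x i) - f (x j)))
       + (\<Sum>i<N. \<Sum>j<N. (x i - x j) \<bullet> (?c i - ?c j))"
    unfolding sum.distrib[symmetric]
    by (intro sum.cong refl) (simp add: ring_rhs_eq inner_diff_right inner_add_right)
  moreover have "(\<Sum>i<N. \<Sum>j<N. (x i - x j) \<bullet> (f (x i) - f (x j)))
     \<le> - \<mu> * (\<Sum>i<N. \<Sum>j<N. (norm (x i - x j))\<^sup>2)"
    unfolding sum_distrib_left by (intro sum_mono one_sided)
  moreover have "(\<Sum>i<N. \<Sum>j<N. (x i - x j) \<bullet> (?c i - ?c j)) \<le> 0"
    using sum_pairwise_inner_diff[OF sum_ring_coupling_eq_0[of N A x, OF \<open>N > 0\<close> balanced]]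
      sum_inner_ring_coupling_nonpos[of N A x, OF \<open>N > 0\<close> balanced posdef]
    by (simp add: mult_nonneg_nonpos)
  ultimately show ?thesis
    by linarith
qed

lemma has_real_derivative_sum_sq_dist:
  fixes z :: "real \<Rightarrow> 'i \<Rightarrow> 'a::real_inner"
  assumes "\<And>i. i \<in> I \<Longrightarrow> ((\<lambda>s. z s i) has_vector_derivative v i) (at t within S)"
  shows "((\<lambda>s. \<Sum>i\<in>I. \<Sum>j\<in>I. (norm (z s i - z s j))\<^sup>2) has_real_derivative
           2 * (\<Sum>i\<in>I. \<Sum>j\<in>I. (z t i - z t j) \<bullet> (v i - v j))) (at t within S)"
proof -
  have "((\<lambda>s. (norm (z s i - z s j))\<^sup>2) has_real_derivative 2 * ((z t i - z t j) \<bullet> (v i - v j)))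
          (at t within S)" if "i \<in> I" "j \<in> I" for i j
  proof -
    have "((\<lambda>s. z s i - z s j) has_derivative (\<lambda>h. h *\<^sub>R (v i - v j))) (at t within S)"
      using assms that unfolding has_vector_derivative_def[symmetric]
      by (intro has_vector_derivative_diff)
    from has_derivative_inner[OF this this] show ?thesis
      unfolding power2_norm_eq_inner has_field_derivative_def
      by (rule has_derivative_eq_rhs) (auto simp: fun_eq_iff inner_commute)
  qed
  then show ?thesis
    by (auto intro!: DERIV_sum simp: sum_distrib_left)
qed

lemma exp_decay_of_differential_inequality:
  fixes V V' :: "real \<Rightarrow> real"
  assumes "\<And>t. t \<ge> 0 \<Longrightarrow> (V has_real_derivative V' t) (at t within {0..})"
    and "\<And>t. t \<ge> 0 \<Longrightarrow> V' t \<le> - k * V t"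
    and "t \<ge> 0"
  shows "V t \<le> V 0 * exp (- k * t)"
proof -
  let ?W = "\<lambda>s. V s * exp (k * s)"
  let ?W' = "\<lambda>s. (V' s + k * V s) * exp (k * s)"
  have "(?W has_real_derivative ?W' s) (at s within {0..t})" if "0 \<le> s" "s \<le> t" for s
  proof -
    have "(?W has_real_derivative ?W' s) (at s within {0..})"
      using assms(1)[OF that(1)] by (auto intro!: derivative_eq_intros simp: algebra_simps)
    thus ?thesis by (rule DERIV_subset) auto
  qed
  then obtain s where s: "s \<in> {0..t}" "?W t - ?W 0 = ?W' s * (t - 0)"
    using mvt_very_simple[OF \<open>t \<ge> 0\<close>, of ?W "\<lambda>s h. ?W' s * h"]
    by (auto simp: has_field_derivative_def)
  have "?W' s \<le> 0"
    using assms(2)[of s] s(1) by (intro mult_nonpos_nonneg) auto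
  with s(2) \<open>t \<ge> 0\<close> have "?W t \<le> ?W 0"
    by (smt (verit) mult_nonpos_nonneg)
  then have "V t * exp (k * t) * exp (- k * t) \<le> V 0 * exp (- k * t)"
    by (simp add: mult_right_mono)
  thus ?thesis by (simp add: mult.assoc exp_add[symmetric])
qed

theorem theorem4p3:
  fixes \<alpha> \<gamma>' \<omega>' :: real and N :: nat
    and A :: "nat \<Rightarrow> nat \<Rightarrow> real^2^2"
    and z :: "real \<Rightarrow> nat \<Rightarrow> real^2"
  assumes "\<alpha> \<ge> 0" and "\<gamma>' < 0" and "\<omega>' > 0" and "N \<ge> 3"
    and balanced: "\<And>i j. i < N \<Longrightarrow> j < N \<Longrightarrow> A i j = A j i"
    and posdef: "\<And>i. i < N \<Longrightarrow> pos_def (sym_part (A i ((i + 1) mod N)))"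
    and sol: "\<And>i t. i < N \<Longrightarrow> t \<ge> 0 \<Longrightarrow>
       ((\<lambda>s. z s i) has_vector_derivative ring_rhs (dvdp_field \<alpha> \<gamma>' \<omega>') N A (z t) i)
         (at t within {0..})"
  shows "\<exists>C r. r > 0 \<and> (\<forall>i<N. \<forall>j<N. \<forall>t\<ge>0. norm (z t i - z t j) \<le> C * exp (- r * t))"
proof -
  let ?F = "ring_rhs (dvdp_field \<alpha> \<gamma>' \<omega>') N A"
  define \<mu> where "\<mu> = min (- \<gamma>') 1"
  define V where "V s = (\<Sum>i<N. \<Sum>j<N. (norm (z s i - z s j))\<^sup>2)" for s
  define V' where "V' s = 2 * (\<Sum>i<N. \<Sum>j<N. (z s i - z s j) \<bullet> (?F (z s) i - ?F (z s) j))" for s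
  have "\<mu> > 0"
    using \<open>\<gamma>' < 0\<close> by (simp add: \<mu>_def)
  have "V' t \<le> - (2 * \<mu>) * V t" for t
    using ring_pairwise_dissipation[OF dvdp_field_one_sided_lipschitz[OF \<open>\<alpha> \<ge> 0\<close>], of N A "z t"]
      \<open>N \<ge> 3\<close> balanced posdef
    by (simp add: V_def V'_def \<mu>_def)
  moreover have "(V has_real_derivative V' t) (at t within {0..})" if "t \<ge> 0" for t
    unfolding V_def V'_def using sol that by (intro has_real_derivative_sum_sq_dist) auto
  ultimately have decay: "V t \<le> V 0 * exp (- (2 * \<mu>) * t)" if "t \<ge> 0" for t
    using exp_decay_of_differential_inequality that by blast
  have "V 0 \<ge> 0"
    by (simp add: V_def sum_nonneg)
  have "norm (z t i - z t j) \<le> sqrt (V 0) * exp (- \<mu> * t)" if "i < N" "j < N" "t \<ge> 0" for i j t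
  proof -
    have "(norm (z t i - z t j))\<^sup>2 \<le> (\<Sum>j'<N. (norm (z t i - z t j'))\<^sup>2)"
      using that by (intro member_le_sum) auto
    also have "\<dots> \<le> V t"
      unfolding V_def using that by (intro member_le_sum[of i] sum_nonneg) auto
    also have "\<dots> \<le> V 0 * exp (- (2 * \<mu>) * t)"
      using decay that by blast
    also have "\<dots> = (sqrt (V 0) * exp (- \<mu> * t))\<^sup>2"
      using \<open>V 0 \<ge> 0\<close> by (simp add: power_mult_distrib flip: exp_double)
    finally show ?thesis
      by (rule power2_le_imp_le) (use \<open>V 0 \<ge> 0\<close> in simp)
  qed
  with \<open>\<mu> > 0\<close> show ?thesis
    by blast
qed

end
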